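(* Let $g:\mathbb{R}\to\mathbb{R}$ be locally Lipschitz continuous with $g(0)=0$, $g(x)x>0$ for all $x\neq0$, $g_0:=\liminf_{|x|\to0}g(x)/x>0$, and $g$ bounded on $\mathbb{R}^-$. Let $\mathcal{G}(x)=\int_0^x g(\xi)\,d\xi$. For $\lambda>0$ consider the autonomous system $x'=y$, $y'=-\lambda g(x)$, and for $0<c<\min\{\mathcal{G}(-\infty),\mathcal{G}(+\infty)\}$ let $\tau(c)$ be the period of the closed orbit $\{\tfrac12 y^2+\lambda\mathcal{G}(x)=\lambda c\}$, i.e. $\tau(c)=\tau^+(c)+\tau^-(c)$ with $$\tau^+(c)=\sqrt{\tfrac{2}{\lambda}}\int_0^{x_+}\frac{d\xi}{\sqrt{c-\mathcal{G}(\xi)}},\qquad \tau^-(c)=\sqrt{\tfrac{2}{\lambda}}\int_{x_-}^0\frac{d\xi}{\sqrt{c-\mathcal{G}(\xi)}},$$ where $x_-<0<x_+$ satisfy $\mathcal{G}(x_-)=\mathcal{G}(x_+)=c$. Then, for each $\lambda>0$, the time-map $\tau$ is continuous and its range includes the interval $]2\pi/\sqrt{\lambda g_0},+\infty[$.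
   Context: $\mathcal{G}(\pm\infty)$ denote the limits (possibly $+\infty$) of $\mathcal{G}(x)$ as $x\to\pm\infty$, which exist since $\mathcal{G}$ is monotone on each half-line. *)

theory Defs
  imports "HOL-Analysis.Analysis"
begin

definition Gprim :: "(real \<Rightarrow> real) \<Rightarrow> real \<Rightarrow> real" where
  "Gprim g x = (if 0 \<le> x then integral {0..x} g else - integral {x..0} g)"

definition Gtop :: "(real \<Rightarrow> real) \<Rightarrow> ereal" where
  "Gtop g = Lim at_top (\<lambda>x. ereal (Gprim g x))"

definition Gbot :: "(real \<Rightarrow> real) \<Rightarrow> ereal" where
  "Gbot g = Lim at_bot (\<lambda>x. ereal (Gprim g x))"

definition xplus :: "(real \<Rightarrow> real) \<Rightarrow> real \<Rightarrow> real" where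
  "xplus g c = (THE x. 0 < x \<and> Gprim g x = c)"

definition xminus :: "(real \<Rightarrow> real) \<Rightarrow> real \<Rightarrow> real" where
  "xminus g c = (THE x. x < 0 \<and> Gprim g x = c)"

definition tau_plus :: "(real \<Rightarrow> real) \<Rightarrow> real \<Rightarrow> real \<Rightarrow> real" where
  "tau_plus g lam c = sqrt (2 / lam) * integral {0..xplus g c} (\<lambda>\<xi>. 1 / sqrt (c - Gprim g \<xi>))"

definition tau_minus :: "(real \<Rightarrow> real) \<Rightarrow> real \<Rightarrow> real \<Rightarrow> real" where
  "tau_minus g lam c = sqrt (2 / lam) * integral {xminus g c..0} (\<lambda>\<xi>. 1 / sqrt (c - Gprim g \<xi>))"

definition time_map :: "(real \<Rightarrow> real) \<Rightarrow> real \<Rightarrow> real \<Rightarrow> real" where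
  "time_map g lam c = tau_plus g lam c + tau_minus g lam c"

definition loc_lipschitz :: "(real \<Rightarrow> real) \<Rightarrow> bool" where
  "loc_lipschitz g \<longleftrightarrow> (\<forall>x. \<exists>e>0. \<exists>L. L-lipschitz_on (cball x e) g)"

end

theory Submission
  imports Defs
begin

(* Reflecting x to -x turns the left half of an orbit into the right half of an orbit for the
   force mirror g x = - g (- x), so the time map is tau_plus g + tau_plus (mirror g) and it
   suffices to study tau_plus for a force that is positive on x > 0 and bounded below by k x
   near 0.  Substituting xi = x_+(c) s fixes the domain of integration to [0, 1].  Since
   c - G (x_+ s) = G x_+ - G (x_+ s) >= k x_+^2 (1 - s^2) / 2 whenever g t >= k t on [0, x_+],
   the rescaled integrand is at most sqrt (2 / k) / sqrt (1 - s^2), whose integral is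
   sqrt (2 / k) pi / 2.  This dominating function gives continuity of tau_plus by dominated
   convergence, and the bound tau_plus <= pi / sqrt (lam k) at small energies, where k may be
   taken arbitrarily close to g0.  Conversely tau_plus c >= sqrt (2 / lam) x_+(c) / sqrt c, which
   is unbounded when G(+oo) is finite and also when G(+oo) is infinite and g is bounded, as then
   x_+(c) >= c / M.  The intermediate value theorem on the interval of energies concludes. *)

lemma loc_lipschitz_continuous_on:
  assumes "loc_lipschitz g"
  shows "continuous_on S g"
proof -
  have "isCont g x" for x
  proof -
    obtain e L where "e > 0" "L-lipschitz_on (cball x e) g"
      using assms unfolding loc_lipschitz_def by blast
    then show ?thesis
      by (intro continuous_on_interior[OF lipschitz_on_continuous_on]) auto
  qed
  then show ?thesis
    by (simp add: continuous_at_imp_continuous_on)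
qed

lemma has_integral_inverse_sqrt_one_minus_square:
  "((\<lambda>s::real. a / sqrt (1 - s\<^sup>2)) has_integral a * pi / 2) {0..1}"
proof -
  have "((\<lambda>s::real. 1 / sqrt (1 - s\<^sup>2)) has_integral arcsin 1 - arcsin 0) {0..1}"
  proof (rule fundamental_theorem_of_calculus_interior)
    show "continuous_on {0..1} arcsin"
      by (rule continuous_on_subset[OF continuous_on_arcsin']) auto
    show "(arcsin has_vector_derivative 1 / sqrt (1 - s\<^sup>2)) (at s)" if "s \<in> {0<..<1}" for s
      using DERIV_arcsin[of s] that
      by (simp add: has_real_derivative_iff_has_vector_derivative divide_inverse)
  qed simp
  from has_integral_mult_right[OF this, of a] show ?thesis
    by simp
qed

locale right_restoring_force =
  fixes g :: "real \<Rightarrow> real"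
  assumes continuous: "continuous_on UNIV g"
    and zero: "g 0 = 0"
    and positive: "\<And>x. 0 < x \<Longrightarrow> 0 < g x"
    and linear_near_0: "\<exists>\<delta>>0. \<exists>k>0. \<forall>x. 0 < x \<and> x < \<delta> \<longrightarrow> k * x \<le> g x"
begin

abbreviation G :: "real \<Rightarrow> real" where
  "G \<equiv> Gprim g"

lemma integrable_g: "g integrable_on {a..b}"
  by (rule integrable_continuous_real) (rule continuous_on_subset[OF continuous], simp)

lemma G_eq_integral: "0 \<le> x \<Longrightarrow> G x = integral {0..x} g"
  by (simp add: Gprim_def)

lemma G_0 [simp]: "G 0 = 0"
  by (simp add: Gprim_def)

lemma G_diff:
  assumes "0 \<le> x" "x \<le> y"
  shows "G y - G x = integral {x..y} g"
  using Henstock_Kurzweil_Integration.integral_combine[OF assms integrable_g] assms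
  by (simp add: G_eq_integral)

lemma linear_lower_bound: "\<exists>k>0. \<forall>x. 0 \<le> x \<and> x \<le> B \<longrightarrow> k * x \<le> g x"
proof -
  obtain \<delta> k where "0 < \<delta>" "0 < k" and near: "\<And>x. 0 < x \<Longrightarrow> x < \<delta> \<Longrightarrow> k * x \<le> g x"
    using linear_near_0 by blast
  have near_0: "k * x \<le> g x" if "0 \<le> x" "x < \<delta>" for x
    using near[of x] that zero by (cases "x = 0") auto
  show ?thesis
  proof (cases "B < \<delta>")
    case True
    with near_0 \<open>0 < k\<close> show ?thesis
      by force
  next
    case False
    have "continuous_on {\<delta>/2..B} g"
      by (rule continuous_on_subset[OF continuous]) simp
    then obtain x0 where x0: "x0 \<in> {\<delta>/2..B}" and min: "\<And>y. y \<in> {\<delta>/2..B} \<Longrightarrow> g x0 \<le> g y"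
      using continuous_attains_inf[of "{\<delta>/2..B}" g] False \<open>0 < \<delta>\<close> by auto
    have "0 < g x0" "0 < B"
      using x0 \<open>0 < \<delta>\<close> positive by auto
    define k' where "k' = min k (g x0 / B)"
    have "k' * x \<le> g x" if "0 \<le> x" "x \<le> B" for x
    proof (cases "x < \<delta>/2")
      case True
      then have "k' * x \<le> k * x"
        using that by (simp add: k'_def mult_right_mono)
      also have "\<dots> \<le> g x"
        using near_0 True that \<open>0 < \<delta>\<close> by auto
      finally show ?thesis .
    next
      case False
      have "k' * x \<le> g x0 / B * B"
        using that \<open>0 < g x0\<close> \<open>0 < B\<close> by (intro mult_mono) (auto simp: k'_def)
      also have "\<dots> \<le> g x"
        using min[of x] False that \<open>0 < B\<close> by simp
      finally show ?thesis .
    qed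
    moreover have "0 < k'"
      using \<open>0 < k\<close> \<open>0 < g x0\<close> \<open>0 < B\<close> by (simp add: k'_def)
    ultimately show ?thesis
      by blast
  qed
qed

lemma G_diff_ge_quadratic:
  assumes "0 \<le> x" "x \<le> y" and slope: "\<And>t. x \<le> t \<Longrightarrow> t \<le> y \<Longrightarrow> k * t \<le> g t"
  shows "k * (y\<^sup>2 - x\<^sup>2) / 2 \<le> G y - G x"
proof -
  have "((\<lambda>t. k * t) has_integral k * y\<^sup>2 / 2 - k * x\<^sup>2 / 2) {x..y}"
    by (rule fundamental_theorem_of_calculus[OF \<open>x \<le> y\<close>])
      (auto intro!: derivative_eq_intros simp: has_real_derivative_iff_has_vector_derivative[symmetric])
  then have "k * y\<^sup>2 / 2 - k * x\<^sup>2 / 2 \<le> integral {x..y} g"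
    by (rule has_integral_le[OF _ integrable_integral[OF integrable_g]]) (use slope in auto)
  then show ?thesis
    using G_diff[OF assms(1,2)] by (simp add: algebra_simps)
qed

lemma G_strict_mono:
  assumes "0 \<le> x" "x < y"
  shows "G x < G y"
proof -
  obtain k where "0 < k" and slope: "\<forall>t. 0 \<le> t \<and> t \<le> y \<longrightarrow> k * t \<le> g t"
    using linear_lower_bound by blast
  have "0 < k * (y\<^sup>2 - x\<^sup>2) / 2"
    using \<open>0 < k\<close> assms by (simp add: power_strict_mono)
  also have "\<dots> \<le> G y - G x"
    using G_diff_ge_quadratic[of x y k] slope assms by auto
  finally show ?thesis
    by simp
qed

lemma G_mono: "0 \<le> x \<Longrightarrow> x \<le> y \<Longrightarrow> G x \<le> G y"
  using G_strict_mono[of x y] by (cases "x = y") auto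

lemma G_pos: "0 < x \<Longrightarrow> 0 < G x"
  using G_strict_mono[of 0 x] by simp

lemma continuous_on_G: "continuous_on {0..B} G"
  using indefinite_integral_continuous_1[OF integrable_g, of 0 B]
  by (rule continuous_on_eq) (simp add: G_eq_integral)

lemma Gtop_eq_SUP: "Gtop g = (SUP x\<in>{0..}. ereal (G x))"
proof -
  let ?S = "SUP x\<in>{0..}. ereal (G x)"
  have "((\<lambda>x. ereal (G x)) \<longlongrightarrow> ?S) at_top"
  proof (rule order_tendstoI)
    fix y
    assume "y < ?S"
    then obtain X where "0 \<le> X" "y < ereal (G X)"
      by (auto simp: less_SUP_iff)
    then have "y < ereal (G x)" if "X \<le> x" for x
      using G_mono[of X x] that by (auto intro: order_less_le_trans)
    then show "eventually (\<lambda>x. y < ereal (G x)) at_top"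
      unfolding eventually_at_top_linorder by blast
  next
    fix y
    assume "?S < y"
    then have "ereal (G x) < y" if "0 \<le> x" for x
      using SUP_upper[of x "{0..}" "\<lambda>x. ereal (G x)"] that by (auto intro: order_le_less_trans)
    then show "eventually (\<lambda>x. ereal (G x) < y) at_top"
      unfolding eventually_at_top_linorder by blast
  qed
  then show ?thesis
    unfolding Gtop_def by (rule tendsto_Lim[rotated]) simp
qed

lemma G_less_Gtop:
  assumes "0 \<le> x"
  shows "ereal (G x) < Gtop g"
proof -
  have "ereal (G x) < ereal (G (x + 1))"
    using G_strict_mono assms by simp
  also have "\<dots> \<le> Gtop g"
    unfolding Gtop_eq_SUP by (rule SUP_upper) (use assms in simp)
  finally show ?thesis .
qed

definition energies :: "real set" where
  "energies = {c. 0 < c \<and> ereal c < Gtop g}"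

lemma G_in_energies: "0 < x \<Longrightarrow> G x \<in> energies"
  using G_pos G_less_Gtop by (simp add: energies_def)

lemma in_energies_if_less_G:
  assumes "0 < c" "c < G B" "0 \<le> B"
  shows "c \<in> energies"
proof -
  have "ereal c < ereal (G B)"
    using assms by simp
  also have "\<dots> < Gtop g"
    using G_less_Gtop assms by simp
  finally show ?thesis
    using assms by (simp add: energies_def)
qed

lemma ex1_xplus:
  assumes "c \<in> energies"
  shows "\<exists>!x. 0 < x \<and> G x = c"
proof (rule ex_ex1I)
  obtain X where "0 \<le> X" "c < G X"
    using assms unfolding energies_def Gtop_eq_SUP less_SUP_iff by auto
  then obtain x where "0 \<le> x" "G x = c"
    using IVT'[of G 0 c X] continuous_on_G[of X] assms by (auto simp: energies_def)
  moreover have "x \<noteq> 0"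
    using \<open>G x = c\<close> assms by (auto simp: energies_def)
  ultimately show "\<exists>x. 0 < x \<and> G x = c"
    by (intro exI[of _ x]) simp
next
  fix x y
  assume "0 < x \<and> G x = c" "0 < y \<and> G y = c"
  then show "x = y"
    using G_strict_mono[of x y] G_strict_mono[of y x] by (cases x y rule: linorder_cases) auto
qed

lemma
  assumes "c \<in> energies"
  shows xplus_pos: "0 < xplus g c" and G_xplus: "G (xplus g c) = c"
  using theI'[OF ex1_xplus[OF assms]] by (auto simp: xplus_def)

lemma xplus_G: "0 < x \<Longrightarrow> xplus g (G x) = x"
  using the1_equality[OF ex1_xplus[OF G_in_energies]] by (simp add: xplus_def)

lemma xplus_less:
  assumes "c \<in> energies" "0 < d" "c < G d"
  shows "xplus g c < d"
  using G_mono[of d "xplus g c"] assms G_xplus[OF assms(1)] by force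

lemma continuous_on_xplus: "continuous_on energies (xplus g)"
proof (rule continuous_at_imp_continuous_on, rule ballI)
  fix c
  assume c: "c \<in> energies"
  define a b where "a = xplus g c / 2" and "b = xplus g c + 1"
  have ab: "0 < a" "a < xplus g c" "xplus g c < b"
    using xplus_pos[OF c] by (auto simp: a_def b_def)
  have cont: "continuous_on {a..b} G"
    by (rule continuous_on_subset[OF continuous_on_G[of b]]) (use ab in auto)
  have "continuous_on (G ` {a..b}) (xplus g)"
    by (rule continuous_on_inv[OF cont]) (use ab in \<open>auto simp: xplus_G\<close>)
  moreover have "{G a<..<G b} \<subseteq> interior (G ` {a..b})"
  proof (rule interior_maximal[OF _ open_greaterThanLessThan], rule subsetI)
    fix y
    assume "y \<in> {G a<..<G b}"
    then obtain x where "a \<le> x" "x \<le> b" "G x = y"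
      using IVT'[of G a y b] cont ab by auto
    then show "y \<in> G ` {a..b}"
      by auto
  qed
  moreover have "c \<in> {G a<..<G b}"
    using G_strict_mono[of a "xplus g c"] G_strict_mono[of "xplus g c" b] ab G_xplus[OF c] by simp
  ultimately show "isCont (xplus g) c"
    by (intro continuous_on_interior[of "G ` {a..b}"]) auto
qed

(* The integrand of tau_plus after the substitution xi = xplus g c * s: the singularity sits at
   s = 1 for every c, where division by zero makes the value 0. *)
definition rescaled_integrand :: "real \<Rightarrow> real \<Rightarrow> real" where
  "rescaled_integrand c s = xplus g c / sqrt (c - G (xplus g c * s))"

lemma tau_plus_eq_rescaled:
  assumes "c \<in> energies"
  shows "tau_plus g lam c = sqrt (2 / lam) * integral {0..1} (rescaled_integrand c)"
proof -
  define x where "x = xplus g c"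
  define f where "f = (\<lambda>\<xi>. 1 / sqrt (c - G \<xi>))"
  have "0 < x"
    using xplus_pos[OF assms] by (simp add: x_def)
  have "rescaled_integrand c = (\<lambda>s. x * f (x * s))"
    by (simp add: fun_eq_iff rescaled_integrand_def f_def x_def)
  then have "integral {0..1} (rescaled_integrand c) = x * integral {0..1} (\<lambda>s. f (x * s))"
    by simp
  also have "\<dots> = integral {0..x} f"
    using integral_stretch_real[where m=x and f=f and a=0 and b=x] \<open>0 < x\<close> by simp
  finally show ?thesis
    by (simp add: tau_plus_def f_def x_def)
qed

lemma rescaled_integrand_at_1: "c \<in> energies \<Longrightarrow> rescaled_integrand c 1 = 0"
  by (simp add: rescaled_integrand_def G_xplus)

lemma rescaled_integrand_nonneg:
  assumes "c \<in> energies" "0 \<le> s" "s \<le> 1"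
  shows "0 \<le> rescaled_integrand c s"
  using G_mono[of "xplus g c * s" "xplus g c"] xplus_pos[OF assms(1)] G_xplus[OF assms(1)] assms(2,3)
  by (simp add: rescaled_integrand_def mult_left_le)

lemma rescaled_integrand_ge:
  assumes "c \<in> energies" "0 \<le> s" "s < 1"
  shows "xplus g c / sqrt c \<le> rescaled_integrand c s"
proof -
  define x where "x = xplus g c"
  have "0 < x" "G x = c"
    using xplus_pos[OF assms(1)] G_xplus[OF assms(1)] by (simp_all add: x_def)
  then have "G (x * s) < c" "0 \<le> G (x * s)"
    using G_strict_mono[of "x * s" x] G_mono[of 0 "x * s"] assms(2,3) by simp_all
  then have "x / sqrt c \<le> x / sqrt (c - G (x * s))"
    using \<open>0 < x\<close> by (intro divide_left_mono) auto
  then show ?thesis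
    by (simp add: rescaled_integrand_def x_def)
qed

lemma rescaled_integrand_le:
  assumes c: "c \<in> energies" and "0 < k" and slope: "\<And>t. 0 \<le> t \<Longrightarrow> t \<le> xplus g c \<Longrightarrow> k * t \<le> g t"
    and s: "0 \<le> s" "s \<le> 1"
  shows "rescaled_integrand c s \<le> sqrt (2 / k) / sqrt (1 - s\<^sup>2)"
proof (cases "s = 1")
  case True
  then show ?thesis
    using rescaled_integrand_at_1[OF c] by simp
next
  case False
  define x where "x = xplus g c"
  have "0 < x" "G x = c"
    using xplus_pos[OF c] G_xplus[OF c] by (simp_all add: x_def)
  have "0 < 1 - s\<^sup>2"
    using s False by (simp add: power_less_one_iff abs_square_less_1)
  have "k * (x\<^sup>2 - (x * s)\<^sup>2) / 2 \<le> c - G (x * s)"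
    using G_diff_ge_quadratic[of "x * s" x k] slope \<open>0 < x\<close> \<open>G x = c\<close> s
    by (simp add: x_def mult_left_le)
  then have le: "x\<^sup>2 * (1 - s\<^sup>2) \<le> 2 / k * (c - G (x * s))"
    using \<open>0 < k\<close> by (simp add: field_simps power_mult_distrib)
  moreover have "0 < x\<^sup>2 * (1 - s\<^sup>2)"
    using \<open>0 < x\<close> \<open>0 < 1 - s\<^sup>2\<close> by simp
  ultimately have "0 < 2 / k * (c - G (x * s))"
    by linarith
  then have "0 < c - G (x * s)"
    by (rule zero_less_mult_pos) (use \<open>0 < k\<close> in simp)
  have "x * sqrt (1 - s\<^sup>2) = sqrt (x\<^sup>2 * (1 - s\<^sup>2))"
    using \<open>0 < x\<close> by (simp add: real_sqrt_mult)
  also have "\<dots> \<le> sqrt (2 / k) * sqrt (c - G (x * s))"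
    using real_sqrt_le_mono[OF le] by (simp only: real_sqrt_mult)
  finally have "x / sqrt (c - G (x * s)) \<le> sqrt (2 / k) / sqrt (1 - s\<^sup>2)"
    using \<open>0 < c - G (x * s)\<close> \<open>0 < 1 - s\<^sup>2\<close> by (simp add: divide_le_eq le_divide_eq mult.commute)
  then show ?thesis
    by (simp add: rescaled_integrand_def x_def)
qed

lemma continuous_on_rescaled_integrand:
  assumes c: "c \<in> energies"
  shows "continuous_on {0..<1} (rescaled_integrand c)"
proof -
  define x where "x = xplus g c"
  have "0 < x" "G x = c"
    using xplus_pos[OF c] G_xplus[OF c] by (simp_all add: x_def)
  have "continuous_on {0..<1} (\<lambda>s. G (x * s))"
    by (rule continuous_on_compose2[OF continuous_on_G[of x]])
      (use \<open>0 < x\<close> in \<open>auto intro!: continuous_intros simp: mult_left_le\<close>)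
  moreover have "sqrt (c - G (x * s)) \<noteq> 0" if "s \<in> {0..<1}" for s
    using G_strict_mono[of "x * s" x] that \<open>0 < x\<close> \<open>G x = c\<close> by simp
  ultimately have "continuous_on {0..<1} (\<lambda>s. x / sqrt (c - G (x * s)))"
    by (intro continuous_intros) auto
  then show ?thesis
    by (simp add: rescaled_integrand_def[abs_def] x_def)
qed

lemma integrable_rescaled_integrand:
  assumes c: "c \<in> energies"
  shows "rescaled_integrand c integrable_on {0..1}"
proof -
  obtain k where "0 < k" and slope: "\<forall>t. 0 \<le> t \<and> t \<le> xplus g c \<longrightarrow> k * t \<le> g t"
    using linear_lower_bound by blast
  have "continuous_on {0<..<1} (rescaled_integrand c)"
    by (rule continuous_on_subset[OF continuous_on_rescaled_integrand[OF c]]) auto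
  then have "rescaled_integrand c \<in> borel_measurable (lebesgue_on {0<..<1})"
    by (rule continuous_imp_measurable_on_sets_lebesgue) simp
  moreover have "(\<lambda>s. sqrt (2 / k) / sqrt (1 - s\<^sup>2)) integrable_on {0<..<1}"
    using has_integral_inverse_sqrt_one_minus_square integrable_on_Icc_iff_Ioo by blast
  ultimately have "rescaled_integrand c integrable_on {0<..<1}"
    by (rule measurable_bounded_by_integrable_imp_integrable)
      (use rescaled_integrand_nonneg[OF c] rescaled_integrand_le[OF c \<open>0 < k\<close>] slope in auto)
  then show ?thesis
    by (simp add: integrable_on_Icc_iff_Ioo)
qed

lemma rescaled_integrand_continuous_in_energy:
  assumes "0 < B" "0 \<le> s" "s \<le> 1"
  shows "continuous_on {0<..<G B} (\<lambda>c. rescaled_integrand c s)"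
proof -
  have in_energies: "c \<in> energies" and below_B: "xplus g c < B" if "c \<in> {0<..<G B}" for c
    using that \<open>0 < B\<close> in_energies_if_less_G xplus_less[of c B] by auto
  show ?thesis
  proof (cases "s = 1")
    case True
    show ?thesis
      by (rule continuous_on_eq[OF continuous_on_const[of _ 0]])
        (simp add: True rescaled_integrand_at_1 in_energies)
  next
    case False
    have "continuous_on {0<..<G B} (xplus g)"
      by (rule continuous_on_subset[OF continuous_on_xplus]) (use in_energies in blast)
    moreover have "xplus g c * s \<in> {0..B}" if "c \<in> {0<..<G B}" for c
    proof -
      have "0 < xplus g c"
        using xplus_pos in_energies that by blast
      moreover have "xplus g c * s \<le> xplus g c"
        using assms \<open>0 < xplus g c\<close> by (simp add: mult_left_le)
      then have "xplus g c * s \<le> B"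
        using below_B[OF that] by linarith
      ultimately show ?thesis
        using assms by simp
    qed
    ultimately have "continuous_on {0<..<G B} (\<lambda>c. G (xplus g c * s))"
      by (intro continuous_on_compose2[OF continuous_on_G[of B] continuous_on_mult_right]) auto
    moreover have "sqrt (c - G (xplus g c * s)) \<noteq> 0" if "c \<in> {0<..<G B}" for c
      using G_strict_mono[of "xplus g c * s" "xplus g c"] assms False
        xplus_pos[OF in_energies[OF that]] G_xplus[OF in_energies[OF that]]
      by simp
    ultimately show ?thesis
      using \<open>continuous_on {0<..<G B} (xplus g)\<close>
      unfolding rescaled_integrand_def by (intro continuous_intros) auto
  qed
qed

lemma continuous_on_integral_rescaled:
  assumes "0 < B"
  shows "continuous_on {0<..<G B} (\<lambda>c. integral {0..1} (rescaled_integrand c))"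
  unfolding continuous_on_sequentially comp_def
proof (intro allI ballI impI, elim conjE)
  fix \<sigma> :: "nat \<Rightarrow> real" and a
  assume a: "a \<in> {0<..<G B}" and \<sigma>: "\<forall>n. \<sigma> n \<in> {0<..<G B}" and lim: "\<sigma> \<longlonglongrightarrow> a"
  obtain k where "0 < k" and slope: "\<forall>t. 0 \<le> t \<and> t \<le> B \<longrightarrow> k * t \<le> g t"
    using linear_lower_bound by blast
  have c: "\<sigma> n \<in> energies" for n
    using \<sigma> \<open>0 < B\<close> by (auto intro: in_energies_if_less_G[of _ B])
  have below_B: "xplus g (\<sigma> n) < B" for n
    using xplus_less[OF c \<open>0 < B\<close>] \<sigma> by auto
  show "(\<lambda>n. integral {0..1} (rescaled_integrand (\<sigma> n))) \<longlonglongrightarrow> integral {0..1} (rescaled_integrand a)"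
  proof (rule dominated_convergence(2))
    show "rescaled_integrand (\<sigma> n) integrable_on {0..1}" for n
      using integrable_rescaled_integrand[OF c] .
    show "(\<lambda>s. sqrt (2 / k) / sqrt (1 - s\<^sup>2)) integrable_on {0..1}"
      using has_integral_inverse_sqrt_one_minus_square by blast
    show "norm (rescaled_integrand (\<sigma> n) s) \<le> sqrt (2 / k) / sqrt (1 - s\<^sup>2)" if s: "s \<in> {0..1}" for n s
    proof -
      have "rescaled_integrand (\<sigma> n) s \<le> sqrt (2 / k) / sqrt (1 - s\<^sup>2)"
        by (intro rescaled_integrand_le[OF c \<open>0 < k\<close>])
          (use slope s below_B[of n] in auto)
      then show ?thesis
        using rescaled_integrand_nonneg[OF c] s by simp
    qed
    show "(\<lambda>n. rescaled_integrand (\<sigma> n) s) \<longlonglongrightarrow> rescaled_integrand a s" if "s \<in> {0..1}" for s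
      using continuous_on_tendsto_compose[OF rescaled_integrand_continuous_in_energy lim a] \<sigma> that
        \<open>0 < B\<close> by simp
  qed
qed

lemma continuous_on_tau_plus: "continuous_on energies (tau_plus g lam)"
proof (rule continuous_at_imp_continuous_on, rule ballI)
  fix c
  assume c: "c \<in> energies"
  define B where "B = xplus g c + 1"
  have "0 < B"
    using xplus_pos[OF c] by (simp add: B_def)
  have "{0<..<G B} \<subseteq> energies"
    using \<open>0 < B\<close> in_energies_if_less_G by auto
  have "continuous_on {0<..<G B} (\<lambda>c. sqrt (2 / lam) * integral {0..1} (rescaled_integrand c))"
    by (intro continuous_on_mult_left continuous_on_integral_rescaled \<open>0 < B\<close>)
  then have "continuous_on {0<..<G B} (tau_plus g lam)"
    by (rule continuous_on_eq)
      (use \<open>{0<..<G B} \<subseteq> energies\<close> in \<open>auto simp: tau_plus_eq_rescaled\<close>)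
  moreover have "c \<in> interior {0<..<G B}"
    using c G_strict_mono[of "xplus g c" B] G_xplus[OF c] xplus_pos[OF c]
    by (simp add: B_def energies_def interior_open)
  ultimately show "isCont (tau_plus g lam) c"
    by (rule continuous_on_interior)
qed

lemma tau_plus_le:
  assumes c: "c \<in> energies" and "0 < lam" "0 < k"
    and slope: "\<And>t. 0 \<le> t \<Longrightarrow> t \<le> xplus g c \<Longrightarrow> k * t \<le> g t"
  shows "tau_plus g lam c \<le> pi / sqrt (lam * k)"
proof -
  have "integral {0..1} (rescaled_integrand c) \<le> sqrt (2 / k) * pi / 2"
    by (rule has_integral_le[OF integrable_integral[OF integrable_rescaled_integrand[OF c]]
          has_integral_inverse_sqrt_one_minus_square])
      (use rescaled_integrand_le[OF c \<open>0 < k\<close> slope] in auto)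
  then have "tau_plus g lam c \<le> sqrt (2 / lam) * (sqrt (2 / k) * pi / 2)"
    unfolding tau_plus_eq_rescaled[OF c] by (rule mult_left_mono) (use \<open>0 < lam\<close> in simp)
  also have "\<dots> = (sqrt (2 / lam) * sqrt (2 / k)) * pi / 2"
    by (simp add: mult.assoc)
  also have "sqrt (2 / lam) * sqrt (2 / k) = 2 / sqrt (lam * k)"
    using assms by (simp add: real_sqrt_mult real_sqrt_divide)
  also have "2 / sqrt (lam * k) * pi / 2 = pi / sqrt (lam * k)"
    by simp
  finally show ?thesis .
qed

lemma tau_plus_ge:
  assumes c: "c \<in> energies" and "0 < lam"
  shows "sqrt (2 / lam) * (xplus g c / sqrt c) \<le> tau_plus g lam c"
proof -
  have "((\<lambda>s::real. xplus g c / sqrt c) has_integral xplus g c / sqrt c) {0<..<1}"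
    using has_integral_Icc_iff_Ioo[THEN iffD1, OF has_integral_const_real[of "xplus g c / sqrt c" 0 1]]
    by simp
  moreover have "rescaled_integrand c integrable_on {0<..<1}"
    using integrable_rescaled_integrand[OF c] by (simp add: integrable_on_Icc_iff_Ioo)
  ultimately have "xplus g c / sqrt c \<le> integral {0<..<1} (rescaled_integrand c)"
    by (rule has_integral_le[OF _ integrable_integral]) (use rescaled_integrand_ge[OF c] in auto)
  then show ?thesis
    unfolding tau_plus_eq_rescaled[OF c] integral_open_interval_real
    by (rule mult_left_mono) (use \<open>0 < lam\<close> in simp)
qed

lemma tau_plus_nonneg:
  assumes "c \<in> energies" "0 < lam"
  shows "0 \<le> tau_plus g lam c"
proof -
  have "0 \<le> sqrt (2 / lam) * (xplus g c / sqrt c)"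
    using xplus_pos[OF assms(1)] assms by (simp add: energies_def)
  also have "\<dots> \<le> tau_plus g lam c"
    using tau_plus_ge[OF assms] .
  finally show ?thesis .
qed

lemma eventually_tau_plus_le:
  assumes "0 < lam" "0 < k" "0 < \<delta>" and slope: "\<And>t. 0 < t \<Longrightarrow> t < \<delta> \<Longrightarrow> k * t \<le> g t"
  shows "\<forall>\<^sub>F c in at_right 0. c \<in> energies \<and> tau_plus g lam c \<le> pi / sqrt (lam * k)"
  unfolding eventually_at_right_field
proof (intro exI[of _ "G \<delta>"] conjI allI impI)
  show "0 < G \<delta>"
    using G_pos \<open>0 < \<delta>\<close> .
  fix c
  assume "0 < c" "c < G \<delta>"
  then show c: "c \<in> energies"
    using in_energies_if_less_G \<open>0 < \<delta>\<close> by simp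
  have "xplus g c < \<delta>"
    using xplus_less[OF c \<open>0 < \<delta>\<close> \<open>c < G \<delta>\<close>] .
  then have "k * t \<le> g t" if "0 \<le> t" "t \<le> xplus g c" for t
    using slope[of t] zero that by (cases "t = 0") auto
  then show "tau_plus g lam c \<le> pi / sqrt (lam * k)"
    by (rule tau_plus_le[OF c \<open>0 < lam\<close> \<open>0 < k\<close>])
qed

lemma G_le_linear:
  assumes "\<And>y. 0 \<le> y \<Longrightarrow> g y \<le> M" "0 \<le> x"
  shows "G x \<le> M * x"
proof -
  have "integral {0..x} g \<le> integral {0..x} (\<lambda>_. M)"
    by (intro integral_le integrable_g) (use assms in auto)
  then show ?thesis
    using assms(2) by (simp add: G_eq_integral mult.commute)
qed

lemma xplus_over_sqrt_unbounded:
  assumes "Gtop g \<noteq> \<infinity> \<or> bdd_above (g ` {0..})"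
  shows "\<exists>c\<in>energies. R \<le> xplus g c / sqrt c"
proof (cases "Gtop g = \<infinity>")
  case False
  have "ereal 0 < ereal (G 1)"
    using G_pos by simp
  also have "\<dots> < Gtop g"
    using G_less_Gtop by simp
  finally obtain \<Gamma> where \<Gamma>: "Gtop g = ereal \<Gamma>" "0 < \<Gamma>"
    using False by (cases "Gtop g") auto
  define X where "X = max 1 (R * sqrt \<Gamma>)"
  have "0 < X"
    by (simp add: X_def)
  have "G X < \<Gamma>"
    using G_less_Gtop[of X] \<open>0 < X\<close> \<Gamma> by simp
  have "R \<le> X / sqrt \<Gamma>"
    using \<open>0 < \<Gamma>\<close> by (simp add: X_def pos_le_divide_eq)
  also have "\<dots> \<le> X / sqrt (G X)"
    using G_pos[OF \<open>0 < X\<close>] \<open>G X < \<Gamma>\<close> \<open>0 < X\<close> by (intro divide_left_mono) auto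
  also have "\<dots> = xplus g (G X) / sqrt (G X)"
    using xplus_G[OF \<open>0 < X\<close>] by simp
  finally show ?thesis
    using G_in_energies[OF \<open>0 < X\<close>] by blast
next
  case True
  with assms obtain M0 where "\<And>y. 0 \<le> y \<Longrightarrow> g y \<le> M0"
    by (auto simp: bdd_above_def)
  then have M: "\<And>y. 0 \<le> y \<Longrightarrow> g y \<le> max M0 1" "0 < max M0 1"
    by (auto intro: le_max_iff_disj[THEN iffD2])
  define M where "M = max M0 1"
  define c where "c = (R * M)\<^sup>2 + 1"
  have "0 < c"
    by (simp add: c_def add_nonneg_pos)
  then have c: "c \<in> energies"
    using True by (simp add: energies_def)
  have "c \<le> M * xplus g c"
    using G_le_linear[OF M(1), of "xplus g c"] G_xplus[OF c] xplus_pos[OF c] by (simp add: M_def)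
  have "R \<le> \<bar>R * M\<bar> / M"
    using M(2) by (simp add: M_def abs_mult)
  also have "\<dots> \<le> sqrt c / M"
    using M(2) real_sqrt_le_mono[of "(R * M)\<^sup>2" c] by (intro divide_right_mono) (simp_all add: c_def M_def)
  also have "\<dots> = (c / sqrt c) / M"
    using \<open>0 < c\<close> by (simp add: real_div_sqrt)
  also have "\<dots> = (c / M) / sqrt c"
    by (simp add: divide_divide_eq_left mult.commute)
  also have "\<dots> \<le> xplus g c / sqrt c"
    using \<open>c \<le> M * xplus g c\<close> M(2) \<open>0 < c\<close> by (intro divide_right_mono) (simp_all add: M_def pos_divide_le_eq mult.commute)
  finally show ?thesis
    using c by blast
qed

lemma tau_plus_unbounded:
  assumes "0 < lam" "Gtop g \<noteq> \<infinity> \<or> bdd_above (g ` {0..})"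
  shows "\<exists>c\<in>energies. T \<le> tau_plus g lam c"
proof -
  obtain c where c: "c \<in> energies" and "T / sqrt (2 / lam) \<le> xplus g c / sqrt c"
    using xplus_over_sqrt_unbounded[OF assms(2)] by blast
  then have "T \<le> sqrt (2 / lam) * (xplus g c / sqrt c)"
    using \<open>0 < lam\<close> by (simp add: pos_divide_le_eq mult.commute)
  also have "\<dots> \<le> tau_plus g lam c"
    using tau_plus_ge[OF c \<open>0 < lam\<close>] .
  finally show ?thesis
    using c by blast
qed

end

definition mirror :: "(real \<Rightarrow> real) \<Rightarrow> real \<Rightarrow> real" where
  "mirror g = (\<lambda>x. - g (- x))"

lemma Gprim_mirror: "Gprim (mirror g) x = Gprim g (- x)"
proof (cases "0 \<le> x")
  case True
  then have "Gprim g (- x) = - integral {-x..0} g"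
    by (cases "x = 0") (auto simp: Gprim_def)
  then show ?thesis
    using True Henstock_Kurzweil_Integration.integral_reflect_real[of 0 "-x" g]
    by (simp add: Gprim_def mirror_def integral_neg)
next
  case False
  then show ?thesis
    using Henstock_Kurzweil_Integration.integral_reflect_real[of "-x" 0 g]
    by (simp add: Gprim_def mirror_def integral_neg)
qed

lemma Gbot_eq_Gtop_mirror: "Gbot g = Gtop (mirror g)"
  unfolding Gbot_def Gtop_def t2_space_class.Lim_def by (simp add: filterlim_at_bot_mirror Gprim_mirror)

lemma bdd_above_mirror:
  assumes "\<exists>M. \<forall>x\<le>0. \<bar>g x\<bar> \<le> M"
  shows "bdd_above (mirror g ` {0..})"
proof -
  obtain M where M: "\<forall>x\<le>0. \<bar>g x\<bar> \<le> M"
    using assms by blast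
  show ?thesis
  proof (rule bdd_aboveI)
    fix y
    assume "y \<in> mirror g ` {0..}"
    then obtain x where "0 \<le> x" "y = - g (- x)"
      by (auto simp: mirror_def)
    then show "y \<le> M"
      using M[rule_format, of "- x"] by simp
  qed
qed

locale restoring_force =
  right: right_restoring_force g + left: right_restoring_force "mirror g" for g
begin

definition energy_domain :: "real set" where
  "energy_domain = {c. 0 < c \<and> ereal c < min (Gbot g) (Gtop g)}"

lemma energy_domain_eq: "energy_domain = right.energies \<inter> left.energies"
  by (auto simp: energy_domain_def right.energies_def left.energies_def Gbot_eq_Gtop_mirror)

lemma connected_energy_domain: "connected energy_domain"
  unfolding connected_iff_interval energy_domain_def
  by (auto intro: ereal_less_eq(3)[THEN iffD2, THEN order.strict_trans1])

lemma xminus_eq: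
  assumes c: "c \<in> left.energies"
  shows "xminus g c = - xplus (mirror g) c"
proof -
  have root: "- xplus (mirror g) c < 0 \<and> Gprim g (- xplus (mirror g) c) = c"
    using left.xplus_pos[OF c] left.G_xplus[OF c] by (simp add: Gprim_mirror)
  have "x = - xplus (mirror g) c" if "x < 0 \<and> Gprim g x = c" for x
    using left.xplus_G[of "- x"] that by (simp add: Gprim_mirror)
  with root have "\<exists>!x. x < 0 \<and> Gprim g x = c"
    by blast
  then show ?thesis
    unfolding xminus_def using root by (rule the1_equality)
qed

lemma tau_minus_eq:
  assumes "c \<in> left.energies"
  shows "tau_minus g lam c = tau_plus (mirror g) lam c"
proof -
  define y where "y = xplus (mirror g) c"
  have "integral {-y..0} (\<lambda>\<xi>. 1 / sqrt (c - Gprim g \<xi>))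
      = integral {0..y} (\<lambda>t. 1 / sqrt (c - Gprim g (- t)))"
    using Henstock_Kurzweil_Integration.integral_reflect_real[of y 0 "\<lambda>t. 1 / sqrt (c - Gprim g (- t))"]
    by simp
  then show ?thesis
    unfolding tau_minus_def tau_plus_def xminus_eq[OF assms] y_def[symmetric]
    by (simp add: Gprim_mirror)
qed

lemma time_map_eq:
  "c \<in> energy_domain \<Longrightarrow> time_map g lam c = tau_plus g lam c + tau_plus (mirror g) lam c"
  by (simp add: time_map_def tau_minus_eq energy_domain_eq)

lemma continuous_on_time_map: "continuous_on energy_domain (time_map g lam)"
proof -
  have "continuous_on energy_domain (\<lambda>c. tau_plus g lam c + tau_plus (mirror g) lam c)"
    unfolding energy_domain_eq
    by (intro continuous_on_add continuous_on_subset[OF right.continuous_on_tau_plus]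
        continuous_on_subset[OF left.continuous_on_tau_plus]) auto
  then show ?thesis
    by (rule continuous_on_eq) (simp add: time_map_eq)
qed

lemma eventually_time_map_le:
  assumes "0 < lam" "0 < k" "0 < \<delta>"
    and slope: "\<And>t. 0 < t \<Longrightarrow> t < \<delta> \<Longrightarrow> k * t \<le> g t \<and> k * t \<le> mirror g t"
  shows "\<forall>\<^sub>F c in at_right 0. c \<in> energy_domain \<and> time_map g lam c \<le> 2 * pi / sqrt (lam * k)"
proof -
  have "\<forall>\<^sub>F c in at_right 0. c \<in> right.energies \<and> tau_plus g lam c \<le> pi / sqrt (lam * k)"
    by (rule right.eventually_tau_plus_le[OF assms(1-3)]) (use slope in blast)
  moreover have "\<forall>\<^sub>F c in at_right 0. c \<in> left.energies \<and> tau_plus (mirror g) lam c \<le> pi / sqrt (lam * k)"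
    by (rule left.eventually_tau_plus_le[OF assms(1-3)]) (use slope in blast)
  ultimately show ?thesis
    by eventually_elim (auto simp: energy_domain_eq time_map_eq)
qed

(* Use the side whose barrier G(+-oo) bounds the energy domain; if both barriers are infinite,
   take the left side, where g is bounded. *)
lemma time_map_unbounded:
  assumes "0 < lam" "bdd_above (mirror g ` {0..})"
  shows "\<exists>c\<in>energy_domain. T \<le> time_map g lam c"
proof (cases "Gtop (mirror g) \<le> Gtop g")
  case True
  obtain c where c: "c \<in> left.energies" "T \<le> tau_plus (mirror g) lam c"
    using left.tau_plus_unbounded assms by blast
  then have "c \<in> energy_domain"
    using True by (auto simp: energy_domain_eq right.energies_def left.energies_def)
  then show ?thesis
    using c right.tau_plus_nonneg[of c lam] \<open>0 < lam\<close> by (force simp: time_map_eq energy_domain_eq)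
next
  case False
  obtain c where c: "c \<in> right.energies" "T \<le> tau_plus g lam c"
    using right.tau_plus_unbounded \<open>0 < lam\<close> False by fastforce
  then have "c \<in> energy_domain"
    using False by (auto simp: energy_domain_eq right.energies_def left.energies_def)
  then show ?thesis
    using c left.tau_plus_nonneg[of c lam] \<open>0 < lam\<close> by (force simp: time_map_eq energy_domain_eq)
qed

lemma time_map_range:
  assumes "0 < lam" "0 < k" "0 < \<delta>"
    and "\<And>t. 0 < t \<Longrightarrow> t < \<delta> \<Longrightarrow> k * t \<le> g t \<and> k * t \<le> mirror g t"
    and "bdd_above (mirror g ` {0..})"
  shows "{2 * pi / sqrt (lam * k)..} \<subseteq> time_map g lam ` energy_domain"
proof
  fix T
  assume T: "T \<in> {2 * pi / sqrt (lam * k)..}"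
  obtain c1 where c1: "c1 \<in> energy_domain" "time_map g lam c1 \<le> 2 * pi / sqrt (lam * k)"
    using eventually_happens'[OF _ eventually_time_map_le[OF assms(1-4)]] by auto
  obtain c2 where c2: "c2 \<in> energy_domain" "T \<le> time_map g lam c2"
    using time_map_unbounded[OF assms(1,5)] by blast
  have "connected (time_map g lam ` energy_domain)"
    by (rule connected_continuous_image[OF continuous_on_time_map connected_energy_domain])
  then show "T \<in> time_map g lam ` energy_domain"
    by (rule connectedD_interval[of _ "time_map g lam c1" "time_map g lam c2"]) (use c1 c2 T in auto)
qed

end

lemma restoring_forceI:
  assumes cont: "continuous_on UNIV g" and "g 0 = 0" and sign: "\<And>x. x \<noteq> 0 \<Longrightarrow> 0 < g x * x"
    and "0 < k" "0 < \<delta>" and slope: "\<And>t. 0 < t \<Longrightarrow> t < \<delta> \<Longrightarrow> k * t \<le> g t \<and> k * t \<le> mirror g t"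
  shows "restoring_force g"
proof -
  have "continuous_on UNIV (mirror g)"
    unfolding mirror_def by (intro continuous_intros continuous_on_compose2[OF cont]) auto
  moreover have "0 < g x" "0 < mirror g x" if "0 < x" for x
    using sign[of x] sign[of "- x"] that by (simp_all add: mirror_def zero_less_mult_iff mult_less_0_iff)
  moreover have "\<exists>\<delta>>0. \<exists>k>0. \<forall>x. 0 < x \<and> x < \<delta> \<longrightarrow> k * x \<le> g x"
    and "\<exists>\<delta>>0. \<exists>k>0. \<forall>x. 0 < x \<and> x < \<delta> \<longrightarrow> k * x \<le> mirror g x"
    using slope \<open>0 < k\<close> \<open>0 < \<delta>\<close> by blast+
  ultimately show ?thesis
    using cont \<open>g 0 = 0\<close> by unfold_locales (auto simp: mirror_def)
qed

lemma Liminf_slope_imp_linear_bound: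
  fixes g :: "real \<Rightarrow> real"
  assumes "ereal k < Liminf (at 0) (\<lambda>x. ereal (g x / x))"
  shows "\<exists>\<delta>>0. \<forall>t. 0 < t \<and> t < \<delta> \<longrightarrow> k * t \<le> g t \<and> k * t \<le> mirror g t"
proof -
  have "eventually (\<lambda>x. k < g x / x) (at 0)"
    using less_LiminfD[OF assms] by simp
  then obtain \<delta> where "\<delta> > 0" and slope: "\<And>x. x \<noteq> 0 \<Longrightarrow> \<bar>x\<bar> < \<delta> \<Longrightarrow> k < g x / x"
    unfolding eventually_at by (auto simp: dist_real_def)
  have "k * t \<le> g t \<and> k * t \<le> mirror g t" if "0 < t" "t < \<delta>" for t
    using slope[of t] slope[of "- t"] that by (simp add: mirror_def field_simps)
  with \<open>\<delta> > 0\<close> show ?thesis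
    by blast
qed

(* 2 pi / sqrt (lam k) is the period of the linear oscillator x'' = - lam k x. *)
lemma linear_period_less_iff:
  assumes "0 < T" "0 < lam" "0 < k"
  shows "2 * pi / sqrt (lam * k) < T \<longleftrightarrow> (2 * pi / T)\<^sup>2 / lam < k"
proof -
  have "2 * pi / sqrt (lam * k) < T \<longleftrightarrow> 2 * pi / T < sqrt (lam * k)"
    using assms by (simp add: divide_less_eq mult.commute)
  also have "\<dots> \<longleftrightarrow> sqrt ((2 * pi / T)\<^sup>2) < sqrt (lam * k)"
    using assms by simp
  also have "\<dots> \<longleftrightarrow> (2 * pi / T)\<^sup>2 < lam * k"
    by (rule real_sqrt_less_iff)
  also have "\<dots> \<longleftrightarrow> (2 * pi / T)\<^sup>2 / lam < k"
    using assms by (simp add: divide_less_eq mult.commute)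
  finally show ?thesis .
qed

lemma exists_slope_below_Liminf:
  fixes g0 :: ereal
  assumes "0 < g0" "0 < lam"
    and T: "(if g0 = \<infinity> then 0 else 2 * pi / sqrt (lam * real_of_ereal g0)) < T"
  shows "\<exists>k>0. ereal k < g0 \<and> 2 * pi / sqrt (lam * k) < T"
proof -
  define q where "q = (2 * pi / T)\<^sup>2 / lam"
  have "0 \<le> q"
    using \<open>0 < lam\<close> by (simp add: q_def)
  show ?thesis
  proof (cases g0)
    case (real r)
    with assms have "0 < r" and bound: "2 * pi / sqrt (lam * r) < T"
      by simp_all
    moreover have "0 < 2 * pi / sqrt (lam * r)"
      using \<open>0 < lam\<close> \<open>0 < r\<close> by simp
    ultimately have "0 < T"
      by linarith
    then have "q < r"
      using linear_period_less_iff[of T lam r] bound \<open>0 < lam\<close> \<open>0 < r\<close> by (simp add: q_def)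
    define k where "k = (q + r) / 2"
    have "0 < k" "q < k" "k < r"
      using \<open>0 \<le> q\<close> \<open>q < r\<close> by (simp_all add: k_def)
    then show ?thesis
      using linear_period_less_iff[of T lam k] \<open>0 < T\<close> \<open>0 < lam\<close> real by (auto simp: q_def)
  next
    case PInf
    with T have "0 < T"
      by simp
    moreover have "0 < q + 1" "q < q + 1"
      using \<open>0 \<le> q\<close> by simp_all
    ultimately show ?thesis
      using linear_period_less_iff[of T lam "q + 1"] \<open>0 < lam\<close> PInf by (auto simp: q_def)
  next
    case MInf
    with \<open>0 < g0\<close> show ?thesis
      by simp
  qed
qed

theorem proposition3p1:
  fixes g :: "real \<Rightarrow> real" and g0 :: ereal and lam :: real
  assumes lip: "loc_lipschitz g"
    and g_0: "g 0 = 0"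
    and sign: "\<And>x. x \<noteq> 0 \<Longrightarrow> g x * x > 0"
    and g0_def: "g0 = Liminf (at 0) (\<lambda>x. ereal (g x / x))"
    and g0_pos: "g0 > 0"
    and bdd: "\<exists>M. \<forall>x\<le>0. \<bar>g x\<bar> \<le> M"
    and lam: "lam > 0"
  shows "continuous_on {c. 0 < c \<and> ereal c < min (Gbot g) (Gtop g)} (time_map g lam)
    \<and> {T. (if g0 = \<infinity> then 0 else 2 * pi / sqrt (lam * real_of_ereal g0)) < T}
        \<subseteq> time_map g lam ` {c. 0 < c \<and> ereal c < min (Gbot g) (Gtop g)}"
proof -
  have slopes: "\<exists>\<delta>>0. \<forall>t. 0 < t \<and> t < \<delta> \<longrightarrow> k * t \<le> g t \<and> k * t \<le> mirror g t"
    if "ereal k < g0" for k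
    using Liminf_slope_imp_linear_bound that g0_def by simp
  obtain k0 where "0 < k0" "ereal k0 < g0"
    using ereal_dense2[OF g0_pos] by (auto simp: zero_ereal_def)
  then obtain \<delta>0 where "0 < \<delta>0" "\<forall>t. 0 < t \<and> t < \<delta>0 \<longrightarrow> k0 * t \<le> g t \<and> k0 * t \<le> mirror g t"
    using slopes by blast
  then interpret restoring_force g
    using restoring_forceI[OF loc_lipschitz_continuous_on[OF lip] g_0] sign \<open>0 < k0\<close> by simp
  have "{T. (if g0 = \<infinity> then 0 else 2 * pi / sqrt (lam * real_of_ereal g0)) < T}
      \<subseteq> time_map g lam ` energy_domain"
    using exists_slope_below_Liminf[OF g0_pos lam] slopes
      time_map_range[OF lam _ _ _ bdd_above_mirror[OF bdd]] by fastforce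
  then show ?thesis
    using continuous_on_time_map by (simp add: energy_domain_def)
qed

end
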